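(* Let $Y$ be a simplicial complex with the property that each $1$-simplex is contained in a $2$-simplex. Then the natural chain map $L_\bullet(Y)\to\Delta_\bullet(Y)$ induces an isomorphism $H_1(L_\bullet(Y))\cong H_1(\Delta_\bullet(Y))$.
   Context: For a simplicial complex $Y$: $L_n(Y)$ is the free abelian group on ordered $(n+1)$-tuples $(y_0,\ldots,y_n)$ of pairwise distinct vertices such that $\{y_0,\ldots,y_n\}$ is an $n$-simplex of $Y$; $\Delta_n(Y)$ (the ordered chain complex) is the free abelian group on ordered $(n+1)$-tuples $(y_0,\ldots,y_n)$ of vertices (repetitions allowed) such that $\{y_0,\ldots,y_n\}$ is a simplex of $Y$. Both carry the differential $d(y_0,\ldots,y_n)=\sum_{i=0}^n(-1)^i(y_0,\ldots,\widehat{y_i},\ldots,y_n)$, and the chain map $L_\bullet(Y)\to\Delta_\bullet(Y)$ is the inclusion on basis elements. *)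

theory Defs
  imports "HOL-Algebra.Algebra"
begin

definition simplicial_complex :: "'a set set \<Rightarrow> bool" where
  "simplicial_complex K \<longleftrightarrow>
     (\<forall>\<sigma>\<in>K. finite \<sigma> \<and> \<sigma> \<noteq> {}) \<and> (\<forall>\<sigma>\<in>K. \<forall>\<tau>. \<tau> \<subseteq> \<sigma> \<and> \<tau> \<noteq> {} \<longrightarrow> \<tau> \<in> K)"

definition is_simplex :: "'a set set \<Rightarrow> nat \<Rightarrow> 'a set \<Rightarrow> bool" where
  "is_simplex K n \<sigma> \<longleftrightarrow> \<sigma> \<in> K \<and> card \<sigma> = n + 1"

definition L_basis :: "'a set set \<Rightarrow> nat \<Rightarrow> 'a list set" where
  "L_basis K n = {ys. length ys = n + 1 \<and> distinct ys \<and> is_simplex K n (set ys)}"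

definition D_basis :: "'a set set \<Rightarrow> nat \<Rightarrow> 'a list set" where
  "D_basis K n = {ys. length ys = n + 1 \<and> set ys \<in> K}"

definition L_chains :: "'a set set \<Rightarrow> nat \<Rightarrow> ('a list \<Rightarrow>\<^sub>0 int) monoid" where
  "L_chains K n = free_Abelian_group (L_basis K n)"

definition D_chains :: "'a set set \<Rightarrow> nat \<Rightarrow> ('a list \<Rightarrow>\<^sub>0 int) monoid" where
  "D_chains K n = free_Abelian_group (D_basis K n)"

definition delete_at :: "nat \<Rightarrow> 'a list \<Rightarrow> 'a list" where
  "delete_at i ys = take i ys @ drop (Suc i) ys"

definition bd :: "('a list \<Rightarrow>\<^sub>0 int) \<Rightarrow> ('a list \<Rightarrow>\<^sub>0 int)" where
  "bd = frag_extend (\<lambda>ys. \<Sum>i<length ys. frag_cmul ((-1) ^ i) (frag_of (delete_at i ys)))"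

definition cycles :: "(nat \<Rightarrow> ('a list \<Rightarrow>\<^sub>0 int) monoid) \<Rightarrow> nat \<Rightarrow> ('a list \<Rightarrow>\<^sub>0 int) set" where
  "cycles C n = {c \<in> carrier (C n). bd c = 0}"

definition boundaries :: "(nat \<Rightarrow> ('a list \<Rightarrow>\<^sub>0 int) monoid) \<Rightarrow> nat \<Rightarrow> ('a list \<Rightarrow>\<^sub>0 int) set" where
  "boundaries C n = bd ` carrier (C (Suc n))"

definition homology :: "(nat \<Rightarrow> ('a list \<Rightarrow>\<^sub>0 int) monoid) \<Rightarrow> nat \<Rightarrow> ('a list \<Rightarrow>\<^sub>0 int) set monoid" where
  "homology C n = subgroup_generated (C n) (cycles C n) Mod boundaries C n"

end

theory Submission
  imports Defs
begin

(* The map nondegenerate_part from Delta_1 to L_1, which kills every tuple with a repeated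
   vertex, is a retraction of the inclusion. A Delta-cycle w differs from the L-cycle
   nondegenerate_part w by a sum of degenerate tuples [a, a] = d [a, a, a], so
   Z_1(Delta) = B_1(Delta) + Z_1(L). Applied to the boundary of a tuple [x, y, z],
   nondegenerate_part gives that boundary, zero, or (for [x, y, x]) the sum [y, x] + [x, y],
   which is d ([x, y, c] + [y, x, c]) for a third vertex c of a 2-simplex containing {x, y}.
   This is where the hypothesis enters; it yields B_1(Delta) \<inter> Z_1(L) = B_1(L). The second
   isomorphism theorem
     Z_1(L) / (B_1(Delta) \<inter> Z_1(L)) = (B_1(Delta) + Z_1(L)) / B_1(Delta)
   then gives the isomorphism. *)

lemma bd_zero [simp]: "bd 0 = 0"
  by (simp add: bd_def)

lemma bd_add: "bd (x + y) = bd x + bd y"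
  by (simp add: bd_def frag_extend_add)

lemma bd_diff: "bd (x - y) = bd x - bd y"
  by (simp add: bd_def frag_extend_diff)

lemma bd_frag_of_pair: "bd (frag_of [a, b]) = frag_of [b] - frag_of [a]"
  by (simp add: bd_def delete_at_def numeral_2_eq_2 lessThan_Suc)

lemma bd_frag_of_triple:
  "bd (frag_of [a, b, c]) = frag_of [b, c] - frag_of [a, c] + frag_of [a, b]"
  by (simp add: bd_def delete_at_def numeral_3_eq_3 lessThan_Suc)

lemma keys_bd_frag_of: "Poly_Mapping.keys (bd (frag_of ys)) \<subseteq> {delete_at i ys |i. i < length ys}"
proof -
  have "Poly_Mapping.keys (bd (frag_of ys))
      \<subseteq> (\<Union>i<length ys. Poly_Mapping.keys (frag_cmul ((-1) ^ i) (frag_of (delete_at i ys))))"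
    unfolding bd_def frag_extend_of by (rule keys_sum)
  also have "\<dots> \<subseteq> {delete_at i ys |i. i < length ys}"
  proof (rule UN_least)
    fix i assume "i \<in> {..<length ys}"
    then show "Poly_Mapping.keys (frag_cmul ((-1) ^ i) (frag_of (delete_at i ys)))
        \<subseteq> {delete_at i ys |i. i < length ys}"
      using keys_cmul[of "(-1) ^ i" "frag_of (delete_at i ys)"] by (auto simp: keys_frag_of)
  qed
  finally show ?thesis .
qed

lemma length_delete_at: "i < length ys \<Longrightarrow> length (delete_at i ys) = length ys - 1"
  by (simp add: delete_at_def)

lemma set_delete_at_subset: "set (delete_at i ys) \<subseteq> set ys"
  by (auto simp: delete_at_def dest: in_set_takeD in_set_dropD)

lemma distinct_delete_at: "distinct ys \<Longrightarrow> distinct (delete_at i ys)"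
  using set_take_disj_set_drop_if_distinct[of ys i "Suc i"] by (auto simp: delete_at_def)

lemma simplicial_complex_face:
  "simplicial_complex K \<Longrightarrow> \<sigma> \<in> K \<Longrightarrow> \<tau> \<subseteq> \<sigma> \<Longrightarrow> \<tau> \<noteq> {} \<Longrightarrow> \<tau> \<in> K"
  unfolding simplicial_complex_def by blast

lemma L_basis_eq: "L_basis K n = {ys \<in> D_basis K n. distinct ys}"
  by (auto simp: L_basis_def D_basis_def is_simplex_def distinct_card)

lemma D_basis_1_iff: "ys \<in> D_basis K 1 \<longleftrightarrow> (\<exists>a b. ys = [a, b] \<and> {a, b} \<in> K)"
  by (auto simp: D_basis_def length_Suc_conv)

lemma D_basis_2_iff: "ys \<in> D_basis K 2 \<longleftrightarrow> (\<exists>a b c. ys = [a, b, c] \<and> {a, b, c} \<in> K)"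
  unfolding D_basis_def numeral_2_eq_2 by (fastforce simp: length_Suc_conv)

lemma delete_at_D_basis:
  assumes "simplicial_complex K" "ys \<in> D_basis K (Suc n)" "i < length ys"
  shows "delete_at i ys \<in> D_basis K n"
proof -
  have len: "length (delete_at i ys) = Suc n"
    using assms by (simp add: D_basis_def length_delete_at)
  then have "set (delete_at i ys) \<noteq> {}" by auto
  then have "set (delete_at i ys) \<in> K"
    using simplicial_complex_face[OF assms(1) _ set_delete_at_subset] assms(2)
    by (simp add: D_basis_def)
  with len show ?thesis by (simp add: D_basis_def)
qed

lemma delete_at_L_basis:
  "simplicial_complex K \<Longrightarrow> ys \<in> L_basis K (Suc n) \<Longrightarrow> i < length ys
    \<Longrightarrow> delete_at i ys \<in> L_basis K n"
  using delete_at_D_basis distinct_delete_at by (auto simp: L_basis_eq)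

lemma subgroup_free_Abelian_groupI:
  assumes "H \<subseteq> carrier (free_Abelian_group S)" "0 \<in> H"
    and "\<And>x y. x \<in> H \<Longrightarrow> y \<in> H \<Longrightarrow> x - y \<in> H"
  shows "subgroup H (free_Abelian_group S)"
proof (rule group.subgroupI[OF group_free_Abelian_group])
  show "H \<subseteq> carrier (free_Abelian_group S)" "H \<noteq> {}" using assms(1,2) by auto
next
  fix x y assume xy: "x \<in> H" "y \<in> H"
  have neg: "- y \<in> H" using assms(2) assms(3)[of 0 y] xy by simp
  moreover have "y \<in> carrier (free_Abelian_group S)" using xy assms(1) by blast
  ultimately show "inv\<^bsub>free_Abelian_group S\<^esub> y \<in> H" by simp
  show "x \<otimes>\<^bsub>free_Abelian_group S\<^esub> y \<in> H"
    using assms(3)[OF xy(1) neg] by simp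
qed

lemma additive_map_into_subgroup:
  assumes H: "subgroup H (free_Abelian_group T)" and f: "\<And>x y. f (x - y) = f x - f y"
    and gen: "\<And>s. s \<in> S \<Longrightarrow> f (frag_of s) \<in> H" and c: "c \<in> carrier (free_Abelian_group S)"
  shows "f c \<in> H"
proof -
  have diff: "x - y \<in> H" if "x \<in> H" "y \<in> H" for x y
  proof -
    have "inv\<^bsub>free_Abelian_group T\<^esub> y = - y"
      using subgroup.mem_carrier[OF H that(2)] by simp
    then show ?thesis
      using subgroup.m_closed[OF H that(1) subgroup.m_inv_closed[OF H that(2)]] by simp
  qed
  have "f 0 = 0" using f[of 0 0] by simp
  then have "f 0 \<in> H" using subgroup.one_closed[OF H] by simp
  moreover have "Poly_Mapping.keys c \<subseteq> S" using c by simp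
  ultimately show ?thesis
    using free_Abelian_group_induct[where P = "\<lambda>c. f c \<in> H"] by (simp add: f gen diff)
qed

lemma additive_map_eq_0:
  fixes f :: "('a \<Rightarrow>\<^sub>0 int) \<Rightarrow> ('b \<Rightarrow>\<^sub>0 int)"
  assumes "\<And>x y. f (x - y) = f x - f y" "\<And>s. s \<in> S \<Longrightarrow> f (frag_of s) = 0"
    and "c \<in> carrier (free_Abelian_group S)"
  shows "f c = 0"
proof -
  have "subgroup {0} (free_Abelian_group UNIV)"
    using group.triv_subgroup[OF group_free_Abelian_group] by simp
  then show ?thesis
    using additive_map_into_subgroup[of "{0}" UNIV f S c] assms by simp
qed

(* Free Abelian groups on different bases share their operations, so both homology groups
   can be computed inside the single group Delta_1. *)
lemma subgroup_generated_free_Abelian_group: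
  assumes "subgroup H (free_Abelian_group S)"
  shows "subgroup_generated (free_Abelian_group S) H = (free_Abelian_group T)\<lparr>carrier := H\<rparr>"
  using subgroup.carrier_subgroup_generated_subgroup[OF assms]
  by (simp add: subgroup_generated_def carrier_subgroup_generated free_Abelian_group_def)

lemma r_coset_free_Abelian_group:
  "H #>\<^bsub>free_Abelian_group S\<^esub> a = H #>\<^bsub>(free_Abelian_group T)\<lparr>carrier := C\<rparr>\<^esub> a"
  by (simp add: r_coset_def)

lemma (in group_hom) image_kernel_rcos:
  assumes "g \<in> carrier G"
  shows "h ` (kernel G H h #>\<^bsub>G\<^esub> g) = {h g}"
proof -
  have "h (k \<otimes>\<^bsub>G\<^esub> g) = h g" if "k \<in> kernel G H h" for k
    using that assms by (simp add: kernel_def)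
  moreover have "\<one>\<^bsub>G\<^esub> \<in> kernel G H h" by (simp add: kernel_def)
  then have "\<one>\<^bsub>G\<^esub> \<otimes>\<^bsub>G\<^esub> g \<in> kernel G H h #>\<^bsub>G\<^esub> g" by (auto simp: r_coset_def)
  ultimately show ?thesis using assms by (force simp: r_coset_def)
qed

lemma bd_free_Abelian_group:
  assumes "\<And>ys i. ys \<in> S \<Longrightarrow> i < length ys \<Longrightarrow> delete_at i ys \<in> T"
    and "c \<in> carrier (free_Abelian_group S)"
  shows "bd c \<in> carrier (free_Abelian_group T)"
proof (rule additive_map_into_subgroup[OF group.subgroup_self bd_diff _ assms(2)])
  show "bd (frag_of ys) \<in> carrier (free_Abelian_group T)" if "ys \<in> S" for ys
    using keys_bd_frag_of[of ys] assms(1)[OF that] by auto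
qed simp

lemma bd_D_chains:
  "simplicial_complex K \<Longrightarrow> c \<in> carrier (D_chains K (Suc n)) \<Longrightarrow> bd c \<in> carrier (D_chains K n)"
  unfolding D_chains_def by (rule bd_free_Abelian_group) (use delete_at_D_basis in auto)

lemma bd_L_chains:
  "simplicial_complex K \<Longrightarrow> c \<in> carrier (L_chains K (Suc n)) \<Longrightarrow> bd c \<in> carrier (L_chains K n)"
  unfolding L_chains_def by (rule bd_free_Abelian_group) (use delete_at_L_basis in auto)

lemma carrier_L_chains_subset: "carrier (L_chains K n) \<subseteq> carrier (D_chains K n)"
  by (auto simp: L_chains_def D_chains_def L_basis_eq)

lemma subgroup_cycles:
  assumes "C n = free_Abelian_group S'" "S' \<subseteq> S"
  shows "subgroup (cycles C n) (free_Abelian_group S)"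
  by (rule subgroup_free_Abelian_groupI)
    (use assms in \<open>auto simp: cycles_def bd_diff dest: subsetD[OF keys_diff]\<close>)

lemma subgroup_cycles_D_chains: "subgroup (cycles (D_chains K) n) (D_chains K n)"
  using subgroup_cycles[of "D_chains K" n "D_basis K n" "D_basis K n"] by (simp add: D_chains_def)

lemma subgroup_cycles_L_chains: "subgroup (cycles (L_chains K) n) (L_chains K n)"
  using subgroup_cycles[of "L_chains K" n "L_basis K n" "L_basis K n"] by (simp add: L_chains_def)

lemma subgroup_cycles_L_chains_D_chains: "subgroup (cycles (L_chains K) n) (D_chains K n)"
  using subgroup_cycles[of "L_chains K" n "L_basis K n" "D_basis K n"]
  by (auto simp: L_chains_def D_chains_def L_basis_eq)

lemma boundaries_1: "boundaries C 1 = bd ` carrier (C 2)"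
  by (simp add: boundaries_def numeral_2_eq_2)

lemma subgroup_boundaries:
  assumes "C (Suc n) = free_Abelian_group S'"
    and "\<And>c. c \<in> carrier (C (Suc n)) \<Longrightarrow> bd c \<in> carrier (C n)"
    and "C n = free_Abelian_group S"
  shows "subgroup (boundaries C n) (C n)"
proof (rule subgroup_free_Abelian_groupI[of _ S, folded assms(3)])
  show "boundaries C n \<subseteq> carrier (C n)" using assms(2) by (auto simp: boundaries_def)
  show "0 \<in> boundaries C n" unfolding boundaries_def assms(1)
    by (rule image_eqI[of _ _ 0]) simp_all
  fix x y assume "x \<in> boundaries C n" "y \<in> boundaries C n"
  then obtain u v where "u \<in> carrier (C (Suc n))" "v \<in> carrier (C (Suc n))" "x = bd u" "y = bd v"
    by (auto simp: boundaries_def)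
  then show "x - y \<in> boundaries C n"
    unfolding boundaries_def using keys_diff[of u v]
    by (intro image_eqI[of _ _ "u - v"]) (auto simp: assms(1) bd_diff)
qed

lemma subgroup_boundaries_D_chains:
  "simplicial_complex K \<Longrightarrow> subgroup (boundaries (D_chains K) n) (D_chains K n)"
  by (rule subgroup_boundaries[OF D_chains_def bd_D_chains D_chains_def])

lemma subgroup_boundaries_L_chains:
  "simplicial_complex K \<Longrightarrow> subgroup (boundaries (L_chains K) n) (L_chains K n)"
  by (rule subgroup_boundaries[OF L_chains_def bd_L_chains L_chains_def])

lemma bd_bd_D_chains_2: "c \<in> carrier (D_chains K 2) \<Longrightarrow> bd (bd c) = 0"
  unfolding D_chains_def
  by (rule additive_map_eq_0)
    (auto simp: D_basis_2_iff bd_frag_of_triple bd_add bd_diff bd_frag_of_pair)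

lemma boundaries_subset_cycles_D_chains:
  assumes "simplicial_complex K"
  shows "boundaries (D_chains K) 1 \<subseteq> cycles (D_chains K) 1"
proof
  fix x assume "x \<in> boundaries (D_chains K) 1"
  then obtain c where c: "c \<in> carrier (D_chains K 2)" "x = bd c"
    unfolding boundaries_1 by blast
  then have "bd c \<in> carrier (D_chains K 1)"
    using bd_D_chains[OF assms, of c 1] by (simp add: numeral_2_eq_2)
  with c show "x \<in> cycles (D_chains K) 1"
    by (simp add: cycles_def bd_bd_D_chains_2)
qed

lemma boundaries_subset_cycles_L_chains:
  assumes "simplicial_complex K"
  shows "boundaries (L_chains K) 1 \<subseteq> cycles (L_chains K) 1"
proof
  fix x assume "x \<in> boundaries (L_chains K) 1"
  then obtain c where c: "c \<in> carrier (L_chains K 2)" "x = bd c"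
    unfolding boundaries_1 by blast
  then have "bd c \<in> carrier (L_chains K 1)"
    using bd_L_chains[OF assms, of c 1] by (simp add: numeral_2_eq_2)
  moreover have "bd (bd c) = 0"
    using c(1) carrier_L_chains_subset bd_bd_D_chains_2 by blast
  ultimately show "x \<in> cycles (L_chains K) 1"
    by (simp add: cycles_def c(2))
qed

definition nondegenerate_part :: "('a list \<Rightarrow>\<^sub>0 int) \<Rightarrow> ('a list \<Rightarrow>\<^sub>0 int)" where
  "nondegenerate_part = frag_extend (\<lambda>ys. if distinct ys then frag_of ys else 0)"

lemma nondegenerate_part_frag_of [simp]:
  "nondegenerate_part (frag_of ys) = (if distinct ys then frag_of ys else 0)"
  by (simp add: nondegenerate_part_def)

lemma nondegenerate_part_diff:
  "nondegenerate_part (x - y) = nondegenerate_part x - nondegenerate_part y"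
  by (simp add: nondegenerate_part_def frag_extend_diff)

lemma nondegenerate_part_add:
  "nondegenerate_part (x + y) = nondegenerate_part x + nondegenerate_part y"
  by (simp add: nondegenerate_part_def frag_extend_add)

lemma nondegenerate_part_D_chains:
  "c \<in> carrier (D_chains K n) \<Longrightarrow> nondegenerate_part c \<in> carrier (L_chains K n)"
  unfolding D_chains_def L_chains_def
  by (rule additive_map_into_subgroup[OF group.subgroup_self nondegenerate_part_diff])
    (auto simp: L_basis_eq)

lemma nondegenerate_part_L_chains:
  "c \<in> carrier (L_chains K n) \<Longrightarrow> nondegenerate_part c = c"
  using additive_map_eq_0[of "\<lambda>c. nondegenerate_part c - c" "L_basis K n" c]
  by (simp add: L_chains_def L_basis_eq nondegenerate_part_diff)

lemma bd_nondegenerate_part_D_chains_1: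
  assumes "c \<in> carrier (D_chains K 1)"
  shows "bd (nondegenerate_part c) = bd c"
proof -
  have "bd (nondegenerate_part (frag_of ys)) = bd (frag_of ys)" if "ys \<in> D_basis K 1" for ys
    using that unfolding D_basis_1_iff by (auto simp: bd_frag_of_pair)
  then show ?thesis
    using additive_map_eq_0[of "\<lambda>c. bd (nondegenerate_part c) - bd c" "D_basis K 1" c] assms
    by (simp add: D_chains_def nondegenerate_part_diff bd_diff)
qed

lemma degenerate_edge_in_boundaries: "{a} \<in> K \<Longrightarrow> frag_of [a, a] \<in> boundaries (D_chains K) 1"
proof -
  assume "{a} \<in> K"
  then have "[a, a, a] \<in> D_basis K 2" by (simp add: D_basis_def)
  moreover have "frag_of [a, a] = bd (frag_of [a, a, a])" by (simp add: bd_frag_of_triple)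
  ultimately show ?thesis unfolding boundaries_1 D_chains_def by auto
qed

lemma degenerate_part_in_boundaries:
  assumes sc: "simplicial_complex K" and c: "c \<in> carrier (D_chains K 1)"
  shows "c - nondegenerate_part c \<in> boundaries (D_chains K) 1"
proof -
  have B: "subgroup (boundaries (D_chains K) 1) (free_Abelian_group (D_basis K 1))"
    using subgroup_boundaries_D_chains[OF sc] by (simp add: D_chains_def)
  have "frag_of ys - nondegenerate_part (frag_of ys) \<in> boundaries (D_chains K) 1"
    if "ys \<in> D_basis K 1" for ys
  proof -
    obtain a b where ys: "ys = [a, b]" "{a, b} \<in> K"
      using \<open>ys \<in> D_basis K 1\<close> unfolding D_basis_1_iff by blast
    show ?thesis
    proof (cases "a = b")
      case True
      then show ?thesis using ys degenerate_edge_in_boundaries[of a K] by simp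
    next
      case False
      then show ?thesis using ys subgroup.one_closed[OF B] by simp
    qed
  qed
  then show ?thesis
    using additive_map_into_subgroup[OF B, of "\<lambda>c. c - nondegenerate_part c" "D_basis K 1" c] c
    by (simp add: D_chains_def nondegenerate_part_diff)
qed

lemma nondegenerate_part_bd_frag_of_triple:
  "nondegenerate_part (bd (frag_of [x, y, z])) =
     (if distinct [x, y, z] then bd (frag_of [x, y, z])
      else if x = z \<and> x \<noteq> y then frag_of [y, x] + frag_of [x, y] else 0)"
  by (auto simp: bd_frag_of_triple nondegenerate_part_add nondegenerate_part_diff)

lemma edge_reversal_in_boundaries:
  assumes sc: "simplicial_complex K"
    and hyp: "\<forall>\<sigma>. is_simplex K 1 \<sigma> \<longrightarrow> (\<exists>\<tau>. is_simplex K 2 \<tau> \<and> \<sigma> \<subseteq> \<tau>)"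
    and xy: "x \<noteq> y" "{x, y} \<in> K"
  shows "frag_of [y, x] + frag_of [x, y] \<in> boundaries (L_chains K) 1"
proof -
  obtain \<tau> where \<tau>: "\<tau> \<in> K" "card \<tau> = 3" "{x, y} \<subseteq> \<tau>"
    using hyp xy by (fastforce simp: is_simplex_def)
  have "\<not> \<tau> \<subseteq> {x, y}"
  proof
    assume "\<tau> \<subseteq> {x, y}"
    then have "card \<tau> \<le> card {x, y}" by (simp add: card_mono)
    with \<tau>(2) xy(1) show False by simp
  qed
  then obtain c where c: "c \<in> \<tau>" "c \<noteq> x" "c \<noteq> y" by blast
  have "{x, y, c} \<in> K" using simplicial_complex_face[OF sc \<tau>(1)] \<tau>(3) c(1) by auto
  then have "[x, y, c] \<in> L_basis K 2" "[y, x, c] \<in> L_basis K 2"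
    using xy c by (simp_all add: L_basis_eq D_basis_def insert_commute)
  then have "frag_of [x, y, c] + frag_of [y, x, c] \<in> carrier (L_chains K 2)"
    using keys_add[of "frag_of [x, y, c]" "frag_of [y, x, c]"]
    by (auto simp: L_chains_def keys_frag_of)
  moreover have "frag_of [y, x] + frag_of [x, y] = bd (frag_of [x, y, c] + frag_of [y, x, c])"
    by (simp add: bd_add bd_frag_of_triple)
  ultimately show ?thesis unfolding boundaries_1 by auto
qed

lemma nondegenerate_part_bd_in_boundaries:
  assumes sc: "simplicial_complex K"
    and hyp: "\<forall>\<sigma>. is_simplex K 1 \<sigma> \<longrightarrow> (\<exists>\<tau>. is_simplex K 2 \<tau> \<and> \<sigma> \<subseteq> \<tau>)"
    and c: "c \<in> carrier (D_chains K 2)"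
  shows "nondegenerate_part (bd c) \<in> boundaries (L_chains K) 1"
proof -
  have B: "subgroup (boundaries (L_chains K) 1) (free_Abelian_group (L_basis K 1))"
    using subgroup_boundaries_L_chains[OF sc] by (simp add: L_chains_def)
  have "nondegenerate_part (bd (frag_of ys)) \<in> boundaries (L_chains K) 1"
    if "ys \<in> D_basis K 2" for ys
  proof -
    obtain x y z where ys: "ys = [x, y, z]" "{x, y, z} \<in> K"
      using \<open>ys \<in> D_basis K 2\<close> unfolding D_basis_2_iff by blast
    consider "distinct [x, y, z]" | "x = z" "x \<noteq> y"
      | "\<not> distinct [x, y, z]" "\<not> (x = z \<and> x \<noteq> y)"
      by blast
    then show ?thesis
    proof cases
      case 1
      then have "frag_of ys \<in> carrier (L_chains K 2)"
        using ys by (simp add: L_chains_def L_basis_eq D_basis_def)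
      then show ?thesis
        using 1 unfolding boundaries_1 by (auto simp: ys nondegenerate_part_bd_frag_of_triple)
    next
      case 2
      then show ?thesis
        using ys edge_reversal_in_boundaries[OF sc hyp, of x y]
        by (simp add: nondegenerate_part_bd_frag_of_triple insert_commute)
    next
      case 3
      then show ?thesis
        using subgroup.one_closed[OF B] by (auto simp: ys nondegenerate_part_bd_frag_of_triple)
    qed
  qed
  then show ?thesis
    using additive_map_into_subgroup[OF B, of "\<lambda>c. nondegenerate_part (bd c)" "D_basis K 2" c] c
    by (simp add: D_chains_def nondegenerate_part_diff bd_diff)
qed

lemma cycles_D_chains_1_eq:
  assumes sc: "simplicial_complex K"
  shows "cycles (D_chains K) 1
           = boundaries (D_chains K) 1 <#>\<^bsub>D_chains K 1\<^esub> cycles (L_chains K) 1"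
proof
  show "cycles (D_chains K) 1
      \<subseteq> boundaries (D_chains K) 1 <#>\<^bsub>D_chains K 1\<^esub> cycles (L_chains K) 1"
  proof
    fix w assume w: "w \<in> cycles (D_chains K) 1"
    then have "w \<in> carrier (D_chains K 1)" "bd w = 0" by (auto simp: cycles_def)
    then have "nondegenerate_part w \<in> cycles (L_chains K) 1"
      by (simp add: cycles_def nondegenerate_part_D_chains bd_nondegenerate_part_D_chains_1)
    moreover have "w - nondegenerate_part w \<in> boundaries (D_chains K) 1"
      using degenerate_part_in_boundaries[OF sc] \<open>w \<in> carrier (D_chains K 1)\<close> by blast
    moreover have "w = (w - nondegenerate_part w) \<otimes>\<^bsub>D_chains K 1\<^esub> nondegenerate_part w"
      by (simp add: D_chains_def)
    ultimately show "w \<in> boundaries (D_chains K) 1 <#>\<^bsub>D_chains K 1\<^esub> cycles (L_chains K) 1"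
      unfolding set_mult_def by blast
  qed
next
  have "cycles (L_chains K) 1 \<subseteq> cycles (D_chains K) 1"
    using carrier_L_chains_subset by (auto simp: cycles_def)
  then show "boundaries (D_chains K) 1 <#>\<^bsub>D_chains K 1\<^esub> cycles (L_chains K) 1
      \<subseteq> cycles (D_chains K) 1"
    using boundaries_subset_cycles_D_chains[OF sc] subgroup.m_closed[OF subgroup_cycles_D_chains]
    unfolding set_mult_def by blast
qed

lemma boundaries_D_chains_1_Int_cycles_L_chains:
  assumes sc: "simplicial_complex K"
    and hyp: "\<forall>\<sigma>. is_simplex K 1 \<sigma> \<longrightarrow> (\<exists>\<tau>. is_simplex K 2 \<tau> \<and> \<sigma> \<subseteq> \<tau>)"
  shows "boundaries (D_chains K) 1 \<inter> cycles (L_chains K) 1 = boundaries (L_chains K) 1"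
proof
  show "boundaries (D_chains K) 1 \<inter> cycles (L_chains K) 1 \<subseteq> boundaries (L_chains K) 1"
  proof
    fix z assume z: "z \<in> boundaries (D_chains K) 1 \<inter> cycles (L_chains K) 1"
    then obtain w where w: "w \<in> carrier (D_chains K 2)" "z = bd w"
      unfolding boundaries_1 by blast
    have "z = nondegenerate_part z"
      using z nondegenerate_part_L_chains[of z K 1] by (simp add: cycles_def)
    then show "z \<in> boundaries (L_chains K) 1"
      using nondegenerate_part_bd_in_boundaries[OF sc hyp w(1)] w(2) by simp
  qed
  show "boundaries (L_chains K) 1 \<subseteq> boundaries (D_chains K) 1 \<inter> cycles (L_chains K) 1"
    using boundaries_subset_cycles_L_chains[OF sc] carrier_L_chains_subset[of K 2]
    unfolding boundaries_1 by blast
qed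

theorem lemma7p1:
  fixes K :: "'a set set"
  assumes "simplicial_complex K"
    and "\<forall>\<sigma>. is_simplex K 1 \<sigma> \<longrightarrow> (\<exists>\<tau>. is_simplex K 2 \<tau> \<and> \<sigma> \<subseteq> \<tau>)"
  shows "\<exists>f. f \<in> iso (homology (L_chains K) 1) (homology (D_chains K) 1) \<and>
             (\<forall>z \<in> cycles (L_chains K) 1.
                f (boundaries (L_chains K) 1 #>\<^bsub>L_chains K 1\<^esub> z)
                  = boundaries (D_chains K) 1 #>\<^bsub>D_chains K 1\<^esub> z)"
proof -
  let ?D = "D_chains K 1" and ?ZL = "cycles (L_chains K) 1"
    and ?BL = "boundaries (L_chains K) 1" and ?BD = "boundaries (D_chains K) 1"
  interpret second_isomorphism_grp ?BD ?D ?ZL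
    unfolding second_isomorphism_grp_def second_isomorphism_grp_axioms_def
    using comm_group.subgroup_imp_normal[OF abelian_free_Abelian_group]
      subgroup_boundaries_D_chains[OF assms(1)] subgroup_cycles_L_chains_D_chains
    by (auto simp: D_chains_def)
  have BD_Int_ZL: "?BD \<inter> ?ZL = ?BL"
    by (rule boundaries_D_chains_1_Int_cycles_L_chains[OF assms])
  have homology_L: "homology (L_chains K) 1 = ?D\<lparr>carrier := ?ZL\<rparr> Mod (?BD \<inter> ?ZL)"
    unfolding homology_def BD_Int_ZL using subgroup_cycles_L_chains[of K 1]
      subgroup_generated_free_Abelian_group[of ?ZL "L_basis K 1" "D_basis K 1"]
    by (simp add: L_chains_def D_chains_def)
  have homology_D: "homology (D_chains K) 1 = ?D\<lparr>carrier := ?BD <#>\<^bsub>?D\<^esub> ?ZL\<rparr> Mod ?BD"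
    unfolding homology_def cycles_D_chains_1_eq[OF assms(1), symmetric]
    using subgroup_cycles_D_chains[of K 1]
      subgroup_generated_free_Abelian_group[of "cycles (D_chains K) 1" "D_basis K 1" "D_basis K 1"]
    by (simp add: D_chains_def)
  have cosets: "?BL #>\<^bsub>L_chains K 1\<^esub> z = ?BL #>\<^bsub>?D\<lparr>carrier := ?ZL\<rparr>\<^esub> z" for z
    unfolding L_chains_def D_chains_def by (rule r_coset_free_Abelian_group)
  have "the_elem ((\<lambda>g. ?BD #>\<^bsub>?D\<^esub> g) ` (?BL #>\<^bsub>L_chains K 1\<^esub> z)) = ?BD #>\<^bsub>?D\<^esub> z"
    if "z \<in> ?ZL" for z
    using group_hom.image_kernel_rcos[OF normal_intersection_hom, of z] that
    unfolding normal_intersection_hom_kernel BD_Int_ZL cosets by simp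
  then show ?thesis
    using normal_intersection_quotient_isom homology_L homology_D by auto
qed

end
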